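(* Let $0<\alpha\le\frac12$ and let $\mu$ be a finite positive Borel measure on $[0,1)$ which is an $\alpha$-Carleson measure. Then $\mathcal{C}_\mu$ is bounded from $H^\infty$ into $\mathcal{B}^{2-\alpha}$; in particular $\mathcal{C}_\mu(H^\infty)\subseteq\mathcal{B}^{2-\alpha}$.
   Context: For a finite positive Borel measure $\mu$ on $[0,1)$, $\mu_n=\int_{[0,1)}t^n\,d\mu(t)$ and $\mathcal{C}_\mu(f)(z)=\sum_{n\ge0}\big(\mu_n\sum_{k=0}^n a_k\big)z^n=\int_{[0,1)}\frac{f(tz)}{1-tz}\,d\mu(t)$ for $f=\sum a_nz^n$ analytic on the unit disc $\mathbb{D}$. For $s>0$, $\mu$ is an $s$-Carleson measure if $\mu([t,1))\le C(1-t)^s$ for all $t\in[0,1)$. $H^\infty$ is the space of bounded analytic functions on $\mathbb{D}$, and for $\beta>0$, $\mathcal{B}^\beta=\{f \text{ analytic on } \mathbb{D}:|f(0)|+\sup_{z\in\mathbb{D}}(1-|z|^2)^\beta|f'(z)|<\infty\}$. *)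

theory Defs
  imports "HOL-Analysis.Analysis"
begin

definition borel_measure_on_01 :: "real measure \<Rightarrow> bool" where
  "borel_measure_on_01 \<mu> \<longleftrightarrow>
     sets \<mu> = sets (restrict_space borel {0..<1}) \<and> finite_measure \<mu>"

definition carleson_measure :: "real \<Rightarrow> real measure \<Rightarrow> bool" where
  "carleson_measure s \<mu> \<longleftrightarrow>
     (\<exists>C. \<forall>t\<in>{0..<1}. measure \<mu> {t..<1} \<le> C * (1 - t) powr s)"

text \<open>The generalized Cesaro operator C_mu, via its integral representation.\<close>
definition cesaro_op :: "real measure \<Rightarrow> (complex \<Rightarrow> complex) \<Rightarrow> complex \<Rightarrow> complex" where
  "cesaro_op \<mu> f z = (LINT t|\<mu>. f (complex_of_real t * z) / (1 - complex_of_real t * z))"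

definition Hinf :: "(complex \<Rightarrow> complex) set" where
  "Hinf = {f. f holomorphic_on ball 0 1 \<and> bounded (f ` ball 0 1)}"

definition Hinf_norm :: "(complex \<Rightarrow> complex) \<Rightarrow> real" where
  "Hinf_norm f = (SUP z\<in>ball 0 1. norm (f z))"

definition Bloch_type :: "real \<Rightarrow> (complex \<Rightarrow> complex) set" where
  "Bloch_type \<beta> = {f. f holomorphic_on ball 0 1 \<and>
      bdd_above ((\<lambda>z. (1 - norm z ^ 2) powr \<beta> * norm (deriv f z)) ` ball 0 1)}"

definition Bloch_type_norm :: "real \<Rightarrow> (complex \<Rightarrow> complex) \<Rightarrow> real" where
  "Bloch_type_norm \<beta> f = norm (f 0) +
      (SUP z\<in>ball 0 1. (1 - norm z ^ 2) powr \<beta> * norm (deriv f z))"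

end

theory Submission
  imports Defs "HOL-Complex_Analysis.Cauchy_Integral_Formula"
begin

text \<open>
  Differentiating \<open>C\<^sub>\<mu> f(z) = \<integral> f(tz) / (1 - tz) d\<mu>(t)\<close> under the integral sign and using the
  Cauchy estimate \<open>|f'(w)| \<le> 2 \<parallel>f\<parallel>\<^sub>\<infinity> / (1 - |w|)\<close> bounds the derivative of the kernel by
  \<open>3 \<parallel>f\<parallel>\<^sub>\<infinity> (1 - t|z|)^(-2)\<close>. For \<open>\<gamma> > \<alpha>\<close> the Carleson condition gives
  \<open>\<integral> (1 - tr)^(-\<gamma>) d\<mu>(t) \<le> K (1 - r)^(\<alpha> - \<gamma>)\<close>: write
  \<open>(1 - tr)^(-\<gamma>) = 1 + \<integral>\<^sub>0\<^sup>t \<gamma> r (1 - sr)^(-\<gamma> - 1) ds\<close>, exchange the order of integration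
  and use \<open>\<mu>([s,1)) \<le> C (1 - s)^\<alpha> \<le> C (1 - sr)^\<alpha>\<close>. With \<open>\<gamma> = 2\<close> this yields
  \<open>|(C\<^sub>\<mu> f)'(z)| \<le> 3 K \<parallel>f\<parallel>\<^sub>\<infinity> (1 - |z|)^(\<alpha> - 2)\<close>, the Bloch-type bound of order \<open>2 - \<alpha>\<close>.
\<close>

lemma has_integral_linear_powr:
  fixes r t \<beta> :: real
  assumes "\<beta> \<noteq> 0" "0 \<le> r" "0 \<le> t" "t * r < 1"
  shows "((\<lambda>s. r * (1 - s * r) powr (\<beta> - 1)) has_integral (1 - (1 - t * r) powr \<beta>) / \<beta>) {0..t}"
proof -
  have pos: "0 < 1 - s * r" if "s \<in> {0..t}" for s
    using that assms mult_right_mono[of s t r] by auto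
  have "((\<lambda>s. r * (1 - s * r) powr (\<beta> - 1)) has_integral
          (- ((1 - t * r) powr \<beta>) / \<beta>) - (- ((1 - 0 * r) powr \<beta>) / \<beta>)) {0..t}"
  proof (rule fundamental_theorem_of_calculus)
    fix s assume s: "s \<in> {0..t}"
    have "((\<lambda>s. - ((1 - s * r) powr \<beta>) / \<beta>) has_real_derivative r * (1 - s * r) powr (\<beta> - 1)) (at s)"
      using pos[OF s] assms(1) by (auto intro!: derivative_eq_intros)
    then show "((\<lambda>s. - ((1 - s * r) powr \<beta>) / \<beta>) has_vector_derivative r * (1 - s * r) powr (\<beta> - 1))
        (at s within {0..t})"
      by (simp add: has_real_derivative_iff_has_vector_derivative has_vector_derivative_at_within)
  qed (use assms in auto)
  then show ?thesis by (simp add: diff_divide_distrib)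
qed

lemma nn_integral_linear_powr:
  fixes c r t \<beta> :: real
  assumes "\<beta> \<noteq> 0" "0 \<le> c" "0 \<le> r" "0 \<le> t" "t * r < 1"
  shows "(\<integral>\<^sup>+s. ennreal (c * r * (1 - s * r) powr (\<beta> - 1)) * indicator {0..t} s \<partial>lborel)
           = c * (1 - (1 - t * r) powr \<beta>) / \<beta>"
  using has_integral_mult_right[OF has_integral_linear_powr[OF assms(1,3-5)], of c] assms(2,3)
  by (subst nn_integral_has_integral_lebesgue') (auto simp: mult.assoc)

lemma powr_neg_layer_cake:
  fixes r t \<gamma> :: real
  assumes "0 < \<gamma>" "0 \<le> r" "0 \<le> t" "t * r < 1"
  shows "ennreal ((1 - t * r) powr (- \<gamma>))
           = 1 + (\<integral>\<^sup>+s. ennreal (\<gamma> * r * (1 - s * r) powr (- \<gamma> - 1)) * indicator {0..t} s \<partial>lborel)"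
proof -
  have "1 \<le> (1 - t * r) powr (- \<gamma>)"
    using powr_mono'[of "- \<gamma>" 0 "1 - t * r"] assms by (simp add: mult_nonneg_nonneg)
  moreover have "\<gamma> * (1 - (1 - t * r) powr (- \<gamma>)) / (- \<gamma>) = (1 - t * r) powr (- \<gamma>) - 1"
    using assms(1) by (simp add: divide_simps)
  ultimately show ?thesis
    using nn_integral_linear_powr[of "- \<gamma>" \<gamma> r t] ennreal_plus[of 1 "(1 - t * r) powr (- \<gamma>) - 1"] assms
    by simp
qed

lemma space_restrict_space_01:
  assumes "sets M = sets (restrict_space borel {0..<(1::real)})"
  shows "space M = {0..<1}"
  using sets_eq_imp_space_eq[OF assms] by simp

lemma borel_measurable_continuous_on_01:
  fixes g :: "real \<Rightarrow> 'b::topological_space"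
  assumes "sets M = sets (restrict_space borel {0..<1})" and "continuous_on {0..<1} g"
  shows "g \<in> borel_measurable M"
  using measurable_cong_sets[OF assms(1) refl] borel_measurable_continuous_on_restrict[OF assms(2)]
  by auto

lemma carleson_constant_nonneg:
  assumes "\<And>t. t \<in> {0..<1} \<Longrightarrow> measure M {t..<1} \<le> C * (1 - t) powr \<alpha>"
  shows "0 \<le> C"
  using assms[of 0] by (simp add: order.trans[OF measure_nonneg])

lemma carleson_measure_Ico_le:
  assumes carleson: "\<And>t. t \<in> {0..<1} \<Longrightarrow> measure M {t..<1} \<le> C * (1 - t) powr \<alpha>"
    and "0 \<le> \<alpha>" "0 \<le> s" "s < 1" "0 \<le> r" "r \<le> 1"
  shows "measure M {s..<1} \<le> C * (1 - s * r) powr \<alpha>"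
proof -
  have "s * r \<le> s" using assms by (simp add: mult_right_le_one_le)
  then have "C * (1 - s) powr \<alpha> \<le> C * (1 - s * r) powr \<alpha>"
    using assms carleson_constant_nonneg[OF carleson] by (intro mult_left_mono powr_mono2) auto
  moreover have "measure M {s..<1} \<le> C * (1 - s) powr \<alpha>" using carleson assms by simp
  ultimately show ?thesis by linarith
qed

lemma carleson_nn_integral_Ico_le:
  fixes M :: "real measure"
  assumes sets: "sets M = sets (restrict_space borel {0..<1})" and "finite_measure M"
    and carleson: "\<And>t. t \<in> {0..<1} \<Longrightarrow> measure M {t..<1} \<le> C * (1 - t) powr \<alpha>"
    and "0 \<le> \<alpha>" "0 \<le> c" "0 \<le> s" "s < 1" "0 \<le> r" "r \<le> 1"
  shows "(\<integral>\<^sup>+t. ennreal (c * (1 - s * r) powr (- \<gamma> - 1)) * indicator {s..<1} t \<partial>M)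
           \<le> ennreal (c * C * (1 - s * r) powr (\<alpha> - \<gamma> - 1))"
proof -
  interpret finite_measure M by fact
  have "s * r \<le> s" using assms by (simp add: mult_right_le_one_le)
  then have "s * r < 1" using assms by linarith
  have "(\<integral>\<^sup>+t. ennreal (c * (1 - s * r) powr (- \<gamma> - 1)) * indicator {s..<1} t \<partial>M)
      = ennreal (c * (1 - s * r) powr (- \<gamma> - 1) * measure M {s..<1})"
    using assms by (subst nn_integral_cmult_indicator)
      (auto simp: sets_restrict_space_iff emeasure_eq_measure ennreal_mult')
  also have "\<dots> \<le> ennreal (c * (1 - s * r) powr (- \<gamma> - 1) * (C * (1 - s * r) powr \<alpha>))"
    using carleson_measure_Ico_le[OF carleson] assms by (intro ennreal_leI mult_left_mono) auto
  also have "c * (1 - s * r) powr (- \<gamma> - 1) * (C * (1 - s * r) powr \<alpha>)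
      = c * C * (1 - s * r) powr (\<alpha> - \<gamma> - 1)"
    using \<open>s * r < 1\<close> by (simp add: powr_add[symmetric] algebra_simps)
  finally show ?thesis .
qed

lemma carleson_nn_integral_bound:
  fixes M :: "real measure"
  assumes sets: "sets M = sets (restrict_space borel {0..<1})" and "finite_measure M"
    and carleson: "\<And>t. t \<in> {0..<1} \<Longrightarrow> measure M {t..<1} \<le> C * (1 - t) powr \<alpha>"
    and "0 \<le> \<alpha>" "\<alpha> < \<gamma>" "0 \<le> r" "r < 1"
  shows "(\<integral>\<^sup>+t. (1 - t * r) powr (- \<gamma>) \<partial>M)
           \<le> emeasure M (space M) + \<gamma> * C / (\<gamma> - \<alpha>) * (1 - r) powr (\<alpha> - \<gamma>)"
proof -
  interpret finite_measure M by fact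
  note [measurable] = borel_measurable_continuous_on_01[OF sets continuous_on_id]
  have space: "space M = {0..<1}" using sets by (rule space_restrict_space_01)
  have "0 < \<gamma>" using \<open>0 \<le> \<alpha>\<close> \<open>\<alpha> < \<gamma>\<close> by simp
  have "0 \<le> C" using carleson by (rule carleson_constant_nonneg)
  define h where "h t s = ennreal (if 0 \<le> s \<and> s \<le> t then \<gamma> * r * (1 - s * r) powr (- \<gamma> - 1) else 0)"
    for t s :: real
  have h_measurable: "(\<lambda>(t, s). h t s) \<in> borel_measurable (M \<Otimes>\<^sub>M lborel)"
    unfolding h_def by measurable
  have layer_cake: "ennreal ((1 - t * r) powr (- \<gamma>)) = 1 + (\<integral>\<^sup>+s. h t s \<partial>lborel)"
    if "t \<in> space M" for t
  proof -
    have "t * r < 1" using that space \<open>0 \<le> r\<close> \<open>r < 1\<close> mult_strict_mono[of t 1 r 1] by auto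
    with powr_neg_layer_cake[OF \<open>0 < \<gamma>\<close> \<open>0 \<le> r\<close>] show ?thesis
      using that space unfolding h_def by (auto intro!: nn_integral_cong simp: indicator_def)
  qed
  have tail: "(\<integral>\<^sup>+t. h t s \<partial>M)
      \<le> ennreal (\<gamma> * C * r * (1 - s * r) powr (\<alpha> - \<gamma> - 1)) * indicator {0..1} s" for s
  proof (cases "0 \<le> s \<and> s < 1")
    case True
    have "(\<integral>\<^sup>+t. h t s \<partial>M) = (\<integral>\<^sup>+t. ennreal (\<gamma> * r * (1 - s * r) powr (- \<gamma> - 1)) * indicator {s..<1} t \<partial>M)"
      unfolding h_def using True by (intro nn_integral_cong) (auto simp: indicator_def space)
    also have "\<dots> \<le> ennreal (\<gamma> * r * C * (1 - s * r) powr (\<alpha> - \<gamma> - 1))"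
      using True \<open>0 < \<gamma>\<close> \<open>0 \<le> r\<close> \<open>r < 1\<close>
      by (intro carleson_nn_integral_Ico_le[OF sets \<open>finite_measure M\<close> carleson \<open>0 \<le> \<alpha>\<close>]) auto
    finally show ?thesis using True by (simp add: ac_simps)
  next
    case False
    then have "(\<integral>\<^sup>+t. h t s \<partial>M) = (\<integral>\<^sup>+t. 0 \<partial>M)"
      unfolding h_def by (intro nn_integral_cong) (auto simp: space)
    then show ?thesis by simp
  qed
  have "\<gamma> * C * (1 - x) / (\<alpha> - \<gamma>) = \<gamma> * C / (\<gamma> - \<alpha>) * (x - 1)" for x
    using \<open>\<alpha> < \<gamma>\<close> by (simp add: field_simps)
  then have tail_integral:
    "(\<integral>\<^sup>+s. ennreal (\<gamma> * C * r * (1 - s * r) powr (\<alpha> - \<gamma> - 1)) * indicator {0..1} s \<partial>lborel)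
      = \<gamma> * C / (\<gamma> - \<alpha>) * ((1 - r) powr (\<alpha> - \<gamma>) - 1)"
    using nn_integral_linear_powr[of "\<alpha> - \<gamma>" "\<gamma> * C" r 1] \<open>\<alpha> < \<gamma>\<close> \<open>0 < \<gamma>\<close> \<open>0 \<le> C\<close> \<open>0 \<le> r\<close> \<open>r < 1\<close>
    by simp
  have "(\<integral>\<^sup>+t. (1 - t * r) powr (- \<gamma>) \<partial>M) = (\<integral>\<^sup>+t. 1 + (\<integral>\<^sup>+s. h t s \<partial>lborel) \<partial>M)"
    by (intro nn_integral_cong layer_cake)
  also have "\<dots> = emeasure M (space M) + (\<integral>\<^sup>+t. (\<integral>\<^sup>+s. h t s \<partial>lborel) \<partial>M)"
    using lborel.borel_measurable_nn_integral[OF h_measurable] by (subst nn_integral_add) auto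
  also have "(\<integral>\<^sup>+t. (\<integral>\<^sup>+s. h t s \<partial>lborel) \<partial>M) = (\<integral>\<^sup>+s. (\<integral>\<^sup>+t. h t s \<partial>M) \<partial>lborel)"
  proof -
    interpret pair_sigma_finite M lborel by unfold_locales
    show ?thesis using Fubini'[OF h_measurable] by simp
  qed
  also have "\<dots> \<le> \<gamma> * C / (\<gamma> - \<alpha>) * ((1 - r) powr (\<alpha> - \<gamma>) - 1)"
    unfolding tail_integral[symmetric] by (intro nn_integral_mono tail)
  also have "\<dots> \<le> \<gamma> * C / (\<gamma> - \<alpha>) * (1 - r) powr (\<alpha> - \<gamma>)"
    using \<open>0 \<le> C\<close> \<open>0 < \<gamma>\<close> \<open>\<alpha> < \<gamma>\<close> by (intro ennreal_leI mult_left_mono) auto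
  finally show ?thesis by (simp add: add_left_mono)
qed

lemma carleson_integral_bound:
  fixes M :: "real measure"
  assumes sets: "sets M = sets (restrict_space borel {0..<1})" and "finite_measure M"
    and carleson: "\<And>t. t \<in> {0..<1} \<Longrightarrow> measure M {t..<1} \<le> C * (1 - t) powr \<alpha>"
    and "0 \<le> \<alpha>" "\<alpha> < \<gamma>" "0 \<le> r" "r < 1"
  shows "integrable M (\<lambda>t. (1 - t * r) powr (- \<gamma>))"
    and "(LINT t|M. (1 - t * r) powr (- \<gamma>))
           \<le> (measure M (space M) + \<gamma> * C / (\<gamma> - \<alpha>)) * (1 - r) powr (\<alpha> - \<gamma>)"
proof -
  interpret finite_measure M by fact
  note [measurable] = borel_measurable_continuous_on_01[OF sets continuous_on_id]
  have space: "space M = {0..<1}" using sets by (rule space_restrict_space_01)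
  have "0 \<le> C" using carleson by (rule carleson_constant_nonneg)
  have "(1 - t * r) powr (- \<gamma>) \<le> (1 - r) powr (- \<gamma>)" if "t \<in> space M" for t
  proof -
    have "t * r \<le> r" using that space \<open>0 \<le> r\<close> by (simp add: mult_left_le_one_le)
    then show ?thesis
      using \<open>0 \<le> \<alpha>\<close> \<open>\<alpha> < \<gamma>\<close> \<open>r < 1\<close> by (intro powr_mono2') auto
  qed
  then show integrable: "integrable M (\<lambda>t. (1 - t * r) powr (- \<gamma>))"
    by (intro integrable_const_bound[where B = "(1 - r) powr (- \<gamma>)"] AE_I2) auto
  have nonneg: "0 \<le> \<gamma> * C / (\<gamma> - \<alpha>) * (1 - r) powr (\<alpha> - \<gamma>)"
    using \<open>0 \<le> C\<close> \<open>0 \<le> \<alpha>\<close> \<open>\<alpha> < \<gamma>\<close> by simp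
  have "ennreal (LINT t|M. (1 - t * r) powr (- \<gamma>)) = (\<integral>\<^sup>+t. (1 - t * r) powr (- \<gamma>) \<partial>M)"
    by (rule nn_integral_eq_integral[OF integrable, symmetric]) simp
  also have "\<dots> \<le> emeasure M (space M) + \<gamma> * C / (\<gamma> - \<alpha>) * (1 - r) powr (\<alpha> - \<gamma>)"
    by (rule carleson_nn_integral_bound[OF assms])
  also have "\<dots> = ennreal (measure M (space M) + \<gamma> * C / (\<gamma> - \<alpha>) * (1 - r) powr (\<alpha> - \<gamma>))"
    using nonneg by (simp add: emeasure_eq_measure ennreal_plus)
  finally have "(LINT t|M. (1 - t * r) powr (- \<gamma>))
      \<le> measure M (space M) + \<gamma> * C / (\<gamma> - \<alpha>) * (1 - r) powr (\<alpha> - \<gamma>)"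
    using nonneg by (subst (asm) ennreal_le_iff) auto
  also have "\<dots> \<le> measure M (space M) * (1 - r) powr (\<alpha> - \<gamma>) + \<gamma> * C / (\<gamma> - \<alpha>) * (1 - r) powr (\<alpha> - \<gamma>)"
    using mult_left_mono[OF _ measure_nonneg, of 1 "(1 - r) powr (\<alpha> - \<gamma>)" M "space M"]
      powr_mono2'[of "\<alpha> - \<gamma>" "1 - r" 1] \<open>\<alpha> < \<gamma>\<close> \<open>0 \<le> r\<close> \<open>r < 1\<close>
    by simp
  finally show "(LINT t|M. (1 - t * r) powr (- \<gamma>))
      \<le> (measure M (space M) + \<gamma> * C / (\<gamma> - \<alpha>)) * (1 - r) powr (\<alpha> - \<gamma>)"
    by (simp add: distrib_right)
qed

definition cesaro_kernel :: "(complex \<Rightarrow> complex) \<Rightarrow> real \<Rightarrow> complex \<Rightarrow> complex" where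
  "cesaro_kernel f t z = f (of_real t * z) / (1 - of_real t * z)"

definition cesaro_kernel_deriv :: "(complex \<Rightarrow> complex) \<Rightarrow> real \<Rightarrow> complex \<Rightarrow> complex" where
  "cesaro_kernel_deriv f t z =
     of_real t * deriv f (of_real t * z) / (1 - of_real t * z) + of_real t * f (of_real t * z) / (1 - of_real t * z)^2"

lemma cesaro_op_eq_integral_kernel: "cesaro_op \<mu> f z = (LINT t|\<mu>. cesaro_kernel f t z)"
  by (simp add: cesaro_op_def cesaro_kernel_def)

lemma of_real_mult_mem_unit_disc:
  fixes t :: real and z :: complex
  assumes "0 \<le> t" "t \<le> 1" "z \<in> ball 0 1"
  shows "norm (of_real t * z) = t * norm z" "t * norm z \<le> norm z" "of_real t * z \<in> ball 0 1"
    "1 - t * norm z \<le> norm (1 - of_real t * z)"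
proof -
  show "norm (of_real t * z) = t * norm z" "t * norm z \<le> norm z"
    using assms by (simp_all add: norm_mult mult_left_le_one_le)
  then show "of_real t * z \<in> ball 0 1" "1 - t * norm z \<le> norm (1 - of_real t * z)"
    using assms(3) norm_triangle_ineq2[of 1 "of_real t * z"] by auto
qed

lemma norm_deriv_le_unit_disc:
  fixes f :: "complex \<Rightarrow> complex"
  assumes hol: "f holomorphic_on ball 0 1" and bound: "\<And>w. w \<in> ball 0 1 \<Longrightarrow> norm (f w) \<le> N"
    and w: "w \<in> ball 0 1"
  shows "norm (deriv f w) \<le> 2 * N / (1 - norm w)"
proof -
  define \<rho> where "\<rho> = (1 - norm w) / 2"
  have "0 < \<rho>" using w by (simp add: \<rho>_def)
  have disc: "cball w \<rho> \<subseteq> ball 0 1"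
  proof
    fix x assume "x \<in> cball w \<rho>"
    then have "norm x \<le> norm w + \<rho>"
      using norm_triangle_ineq2[of x w] by (simp add: dist_norm norm_minus_commute)
    moreover have "norm w + \<rho> < 1" using w by (simp add: \<rho>_def field_simps)
    ultimately show "x \<in> ball 0 1" by simp
  qed
  have "norm ((deriv ^^ 1) f w) \<le> fact 1 * N / \<rho> ^ 1"
  proof (rule Cauchy_inequality)
    show "f holomorphic_on ball w \<rho>"
      using hol disc ball_subset_cball holomorphic_on_subset by blast
    show "continuous_on (cball w \<rho>) f"
      using hol disc holomorphic_on_imp_continuous_on continuous_on_subset by blast
    show "norm (f x) \<le> N" if "norm (w - x) = \<rho>" for x
      using that disc bound by (simp add: subset_iff dist_norm)
  qed (use \<open>0 < \<rho>\<close> in auto)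
  then show ?thesis by (simp add: \<rho>_def mult.commute)
qed

lemma has_field_derivative_cesaro_kernel:
  assumes hol: "f holomorphic_on ball 0 1" and "0 \<le> t" "t \<le> 1" and u: "u \<in> ball 0 1"
  shows "(cesaro_kernel f t has_field_derivative cesaro_kernel_deriv f t u) (at u)"
proof -
  have tu: "of_real t * u \<in> ball 0 1" and nonzero: "1 - of_real t * u \<noteq> 0"
    using of_real_mult_mem_unit_disc[OF assms(2-4)] by auto
  have "(f has_field_derivative deriv f (of_real t * u)) (at (of_real t * u))"
    using hol tu by (intro holomorphic_derivI[of f "ball 0 1"]) auto
  then have numerator: "((\<lambda>u. f (of_real t * u)) has_field_derivative deriv f (of_real t * u) * of_real t) (at u)"
    by (rule DERIV_chain2) (auto intro!: derivative_eq_intros)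
  have denominator: "((\<lambda>u. 1 - of_real t * u) has_field_derivative - of_real t) (at u)"
    by (auto intro!: derivative_eq_intros)
  have quotient_rule: "(D * c * a - F * - c) / (a * a) = c * D / a + c * F / a^2" if "a \<noteq> 0"
    for a c D F :: complex
    using that by (simp add: field_simps power2_eq_square)
  from DERIV_divide[OF numerator denominator nonzero] show ?thesis
    unfolding cesaro_kernel_def cesaro_kernel_deriv_def quotient_rule[OF nonzero] .
qed

lemma norm_cesaro_kernel_le:
  assumes bound: "\<And>w. w \<in> ball 0 1 \<Longrightarrow> norm (f w) \<le> N" and "0 \<le> t" "t \<le> 1" and u: "u \<in> ball 0 1"
  shows "norm (cesaro_kernel f t u) \<le> N / (1 - norm u)"
proof -
  note tu = of_real_mult_mem_unit_disc[OF assms(2-4)]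
  have "0 \<le> N" using order_trans[OF norm_ge_zero bound[of 0]] by simp
  then show ?thesis
    unfolding cesaro_kernel_def norm_divide using tu bound[OF tu(3)] u
    by (intro frac_le) auto
qed

lemma norm_cesaro_kernel_deriv_le:
  assumes hol: "f holomorphic_on ball 0 1" and bound: "\<And>w. w \<in> ball 0 1 \<Longrightarrow> norm (f w) \<le> N"
    and "0 \<le> t" "t \<le> 1" and u: "u \<in> ball 0 1"
  shows "norm (cesaro_kernel_deriv f t u) \<le> 3 * N * (1 - t * norm u) powr (- 2)"
proof -
  note tu = of_real_mult_mem_unit_disc[OF assms(3-5)]
  define d where "d = 1 - t * norm u"
  have "0 < d" using tu u by (simp add: d_def)
  have "0 \<le> N" using order_trans[OF norm_ge_zero bound[of 0]] by simp
  have "norm (deriv f (of_real t * u)) \<le> 2 * N / d"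
    using norm_deriv_le_unit_disc[OF hol bound tu(3)] tu by (simp add: d_def)
  then have "t * norm (deriv f (of_real t * u)) \<le> 2 * N / d"
    using \<open>t \<le> 1\<close> by (meson mult_left_le_one_le norm_ge_zero order_trans \<open>0 \<le> t\<close>)
  then have first: "norm (of_real t * deriv f (of_real t * u) / (1 - of_real t * u)) \<le> 2 * N / d / d"
    unfolding norm_divide norm_mult using tu \<open>0 < d\<close> \<open>0 \<le> N\<close> \<open>0 \<le> t\<close>
    by (intro frac_le) (auto simp: d_def)
  have "t * norm (f (of_real t * u)) \<le> N"
    using bound[OF tu(3)] \<open>t \<le> 1\<close> by (meson mult_left_le_one_le norm_ge_zero order_trans \<open>0 \<le> t\<close>)
  then have second: "norm (of_real t * f (of_real t * u) / (1 - of_real t * u)^2) \<le> N / d^2"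
    unfolding norm_divide norm_mult norm_power using tu \<open>0 < d\<close> \<open>0 \<le> N\<close> \<open>0 \<le> t\<close>
    by (intro frac_le power_mono) (auto simp: d_def)
  have "norm (cesaro_kernel_deriv f t u) \<le> 2 * N / d / d + N / d^2"
    unfolding cesaro_kernel_deriv_def by (rule order.trans[OF norm_triangle_ineq add_mono[OF first second]])
  also have "\<dots> = 3 * N / d^2"
    by (simp add: power2_eq_square add_divide_distrib[symmetric])
  also have "\<dots> = 3 * N * d powr (- 2)"
    using \<open>0 < d\<close> by (simp add: powr_minus_divide)
  finally show ?thesis by (simp add: d_def)
qed

lemma continuous_on_cesaro_kernel:
  assumes "f holomorphic_on ball 0 1" and "u \<in> ball 0 1"
  shows "continuous_on {0..1} (\<lambda>t. cesaro_kernel f t u)"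
proof -
  have inside: "of_real t * u \<in> ball 0 1" if "t \<in> {0..1}" for t
    using of_real_mult_mem_unit_disc[OF _ _ assms(2)] that by simp
  then have "1 - of_real t * u \<noteq> 0" if "t \<in> {0..1}" for t
    using that by fastforce
  moreover have "continuous_on {0..1} (\<lambda>t. f (of_real t * u))"
    using inside
    by (intro continuous_on_compose2[OF holomorphic_on_imp_continuous_on[OF assms(1)]])
      (auto intro!: continuous_intros)
  ultimately show ?thesis
    unfolding cesaro_kernel_def by (auto intro!: continuous_intros)
qed

lemma has_field_derivative_lebesgue_integral:
  fixes \<phi> \<phi>' :: "'a \<Rightarrow> 'b::{real_normed_field, banach, second_countable_topology} \<Rightarrow> 'b"
  assumes "finite_measure M" and S: "open S" "convex S" "z \<in> S"
    and deriv: "\<And>t u. t \<in> space M \<Longrightarrow> u \<in> S \<Longrightarrow> (\<phi> t has_field_derivative \<phi>' t u) (at u)"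
    and bound: "\<And>t u. t \<in> space M \<Longrightarrow> u \<in> S \<Longrightarrow> norm (\<phi>' t u) \<le> B"
    and integrable: "\<And>u. u \<in> S \<Longrightarrow> integrable M (\<lambda>t. \<phi> t u)"
  shows "((\<lambda>u. LINT t|M. \<phi> t u) has_field_derivative (LINT t|M. \<phi>' t z)) (at z)"
proof -
  interpret finite_measure M by fact
  define Q where "Q u t = (\<phi> t u - \<phi> t z) / (u - z)" for u t
  have Q_bound: "norm (Q u t) \<le> B" if "t \<in> space M" "u \<in> S" "u \<noteq> z" for u t
  proof -
    have "norm (\<phi> t u - \<phi> t z) \<le> B * norm (u - z)"
      using that S deriv bound
      by (intro field_differentiable_bound[of S "\<phi> t" "\<phi>' t"]) (auto intro: has_field_derivative_at_within)
    then show ?thesis using that by (simp add: Q_def norm_divide divide_le_eq)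
  qed
  have Q_lim: "((\<lambda>u. Q u t) \<longlongrightarrow> \<phi>' t z) (at z)" if "t \<in> space M" for t
    using deriv[OF that S(3)] by (simp add: Q_def has_field_derivative_iff)
  have Q_integral_lim: "((\<lambda>u. LINT t|M. Q u t) \<longlongrightarrow> (LINT t|M. \<phi>' t z)) (at z within S)"
    unfolding tendsto_at_iff_sequentially comp_def
  proof (intro allI impI)
    fix X :: "nat \<Rightarrow> 'b" assume X: "\<forall>i. X i \<in> S - {z}" "X \<longlonglongrightarrow> z"
    have Q_seq: "(\<lambda>i. Q (X i) t) \<longlonglongrightarrow> \<phi>' t z" if "t \<in> space M" for t
      using Q_lim[OF that] X unfolding tendsto_at_iff_sequentially comp_def by auto
    have Q_measurable: "(\<lambda>t. Q (X i) t) \<in> borel_measurable M" for i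
      using integrable[of "X i"] integrable[OF S(3)] X(1) by (auto simp: Q_def)
    show "(\<lambda>i. LINT t|M. Q (X i) t) \<longlonglongrightarrow> (LINT t|M. \<phi>' t z)"
    proof (rule integral_dominated_convergence[where w = "\<lambda>_. B"])
      show "(\<lambda>t. \<phi>' t z) \<in> borel_measurable M"
        using Q_measurable Q_seq by (rule borel_measurable_LIMSEQ_metric)
    qed (use Q_measurable Q_seq Q_bound X(1) in \<open>auto intro!: AE_I2\<close>)
  qed
  have "(LINT t|M. Q u t) = ((LINT t|M. \<phi> t u) - (LINT t|M. \<phi> t z)) / (u - z)"
    if "u \<in> S" for u
    using integrable[OF that] integrable[OF S(3)] by (simp add: Q_def)
  then have "\<forall>\<^sub>F u in at z within S.
      (LINT t|M. Q u t) = ((LINT t|M. \<phi> t u) - (LINT t|M. \<phi> t z)) / (u - z)"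
    by (simp add: eventually_at_filter)
  with Q_integral_lim have "((\<lambda>u. ((LINT t|M. \<phi> t u) - (LINT t|M. \<phi> t z)) / (u - z)) \<longlongrightarrow> (LINT t|M. \<phi>' t z))
      (at z within S)"
    by (simp add: tendsto_cong)
  then show ?thesis
    using at_within_open[OF S(3,1)] by (simp add: has_field_derivative_iff)
qed

lemma has_field_derivative_cesaro_op:
  fixes \<mu> :: "real measure"
  assumes sets: "sets \<mu> = sets (restrict_space borel {0..<1})" and "finite_measure \<mu>"
    and hol: "f holomorphic_on ball 0 1" and bound: "\<And>w. w \<in> ball 0 1 \<Longrightarrow> norm (f w) \<le> N"
    and z: "z \<in> ball 0 1"
  shows "(cesaro_op \<mu> f has_field_derivative (LINT t|\<mu>. cesaro_kernel_deriv f t z)) (at z)"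
proof -
  interpret finite_measure \<mu> by fact
  have space: "space \<mu> = {0..<1}" using sets by (rule space_restrict_space_01)
  define \<rho> where "\<rho> = (1 + norm z) / 2"
  have "norm z < \<rho>" "\<rho> < 1" using z by (auto simp: \<rho>_def)
  have "0 \<le> N" using order_trans[OF norm_ge_zero bound[of 0]] by simp
  have "((\<lambda>u. LINT t|\<mu>. cesaro_kernel f t u) has_field_derivative (LINT t|\<mu>. cesaro_kernel_deriv f t z)) (at z)"
  proof (rule has_field_derivative_lebesgue_integral[where S = "ball 0 \<rho>" and B = "3 * N * (1 - \<rho>) powr (- 2)"])
    fix t u assume t: "t \<in> space \<mu>" and u: "u \<in> ball (0::complex) \<rho>"
    then have "t * norm u \<le> \<rho>" "0 \<le> t" "t \<le> 1" "u \<in> ball 0 1"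
      using \<open>\<rho> < 1\<close> space mult_left_le_one_le[of "norm u" t] by auto
    then show "(cesaro_kernel f t has_field_derivative cesaro_kernel_deriv f t u) (at u)"
      using has_field_derivative_cesaro_kernel[OF hol] by blast
    have "norm (cesaro_kernel_deriv f t u) \<le> 3 * N * (1 - t * norm u) powr (- 2)"
      using norm_cesaro_kernel_deriv_le[OF hol bound] \<open>0 \<le> t\<close> \<open>t \<le> 1\<close> \<open>u \<in> ball 0 1\<close> by blast
    also have "\<dots> \<le> 3 * N * (1 - \<rho>) powr (- 2)"
      using \<open>t * norm u \<le> \<rho>\<close> \<open>\<rho> < 1\<close> \<open>0 \<le> N\<close> by (intro mult_left_mono powr_mono2') auto
    finally show "norm (cesaro_kernel_deriv f t u) \<le> 3 * N * (1 - \<rho>) powr (- 2)" .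
  next
    fix u assume "u \<in> ball (0::complex) \<rho>"
    then have u: "u \<in> ball 0 1" using \<open>\<rho> < 1\<close> by simp
    show "integrable \<mu> (\<lambda>t. cesaro_kernel f t u)"
    proof (rule integrable_const_bound[where B = "N / (1 - norm u)"])
      show "AE t in \<mu>. norm (cesaro_kernel f t u) \<le> N / (1 - norm u)"
        using norm_cesaro_kernel_le[OF bound _ _ u] by (intro AE_I2) (auto simp: space)
      show "(\<lambda>t. cesaro_kernel f t u) \<in> borel_measurable \<mu>"
        using continuous_on_cesaro_kernel[OF hol u]
        by (intro borel_measurable_continuous_on_01[OF sets]) (auto intro: continuous_on_subset)
    qed
  qed (use assms \<open>norm z < \<rho>\<close> in auto)
  then show ?thesis by (simp add: cesaro_op_eq_integral_kernel[abs_def])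
qed

lemma norm_deriv_cesaro_op_le:
  fixes \<mu> :: "real measure"
  assumes sets: "sets \<mu> = sets (restrict_space borel {0..<1})" and "finite_measure \<mu>"
    and carleson: "\<And>t. t \<in> {0..<1} \<Longrightarrow> measure \<mu> {t..<1} \<le> C * (1 - t) powr \<alpha>"
    and "0 \<le> \<alpha>" "\<alpha> < 2"
    and hol: "f holomorphic_on ball 0 1" and bound: "\<And>w. w \<in> ball 0 1 \<Longrightarrow> norm (f w) \<le> N"
    and z: "z \<in> ball 0 1"
  shows "norm (deriv (cesaro_op \<mu> f) z)
           \<le> 3 * N * (measure \<mu> (space \<mu>) + 2 * C / (2 - \<alpha>)) * (1 - norm z) powr (\<alpha> - 2)"
proof -
  have space: "space \<mu> = {0..<1}" using sets by (rule space_restrict_space_01)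
  have "0 \<le> N" using order_trans[OF norm_ge_zero bound[of 0]] by simp
  have "norm z < 1" using z by simp
  note carleson_bound = carleson_integral_bound[OF sets \<open>finite_measure \<mu>\<close> carleson \<open>0 \<le> \<alpha>\<close> \<open>\<alpha> < 2\<close> norm_ge_zero this]
  have "deriv (cesaro_op \<mu> f) z = (LINT t|\<mu>. cesaro_kernel_deriv f t z)"
    using has_field_derivative_cesaro_op[OF sets \<open>finite_measure \<mu>\<close> hol bound z] by (rule DERIV_imp_deriv)
  also have "norm \<dots> \<le> (LINT t|\<mu>. norm (cesaro_kernel_deriv f t z))"
    by (rule integral_norm_bound)
  also have "\<dots> \<le> (LINT t|\<mu>. 3 * N * (1 - t * norm z) powr (- 2))"
    using norm_cesaro_kernel_deriv_le[OF hol bound _ _ z] carleson_bound(1) \<open>0 \<le> N\<close>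
    by (intro integral_mono') (auto simp: space)
  also have "\<dots> = 3 * N * (LINT t|\<mu>. (1 - t * norm z) powr (- 2))"
    by simp
  also have "\<dots> \<le> 3 * N * ((measure \<mu> (space \<mu>) + 2 * C / (2 - \<alpha>)) * (1 - norm z) powr (\<alpha> - 2))"
    using carleson_bound(2) \<open>0 \<le> N\<close> by (intro mult_left_mono) auto
  finally show ?thesis by (simp add: mult.assoc)
qed

lemma one_minus_square_powr_le:
  fixes x \<beta> :: real
  assumes "0 \<le> x" "x \<le> 1" "0 \<le> \<beta>"
  shows "(1 - x^2) powr \<beta> \<le> 2 powr \<beta> * (1 - x) powr \<beta>"
proof -
  have "1 - x^2 = (1 - x) * (1 + x)" by (simp add: power2_eq_square algebra_simps)
  also have "\<dots> \<le> (1 - x) * 2" using assms by (intro mult_left_mono) auto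
  finally have "(1 - x^2) powr \<beta> \<le> ((1 - x) * 2) powr \<beta>"
    using assms by (intro powr_mono2) (auto simp: power_le_one)
  then show ?thesis using assms by (subst (asm) powr_mult) (simp_all add: mult.commute)
qed

lemma norm_le_Hinf_norm:
  assumes "f \<in> Hinf" "w \<in> ball 0 1"
  shows "norm (f w) \<le> Hinf_norm f"
proof -
  have "bounded (f ` ball 0 1)" using assms(1) by (simp add: Hinf_def)
  then have "bdd_above ((\<lambda>z. norm (f z)) ` ball 0 1)"
    by (auto simp: bounded_iff bdd_above_def)
  then show ?thesis unfolding Hinf_norm_def by (rule cSUP_upper[OF assms(2)])
qed

lemma Bloch_weight_deriv_cesaro_op_le:
  fixes \<mu> :: "real measure"
  assumes sets: "sets \<mu> = sets (restrict_space borel {0..<1})" and "finite_measure \<mu>"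
    and carleson: "\<And>t. t \<in> {0..<1} \<Longrightarrow> measure \<mu> {t..<1} \<le> C * (1 - t) powr \<alpha>"
    and "0 \<le> \<alpha>" "\<alpha> < 2"
    and hol: "f holomorphic_on ball 0 1" and bound: "\<And>w. w \<in> ball 0 1 \<Longrightarrow> norm (f w) \<le> N"
    and z: "z \<in> ball 0 1"
  shows "(1 - norm z ^ 2) powr (2 - \<alpha>) * norm (deriv (cesaro_op \<mu> f) z)
           \<le> 2 powr (2 - \<alpha>) * 3 * (measure \<mu> (space \<mu>) + 2 * C / (2 - \<alpha>)) * N"
proof -
  have "norm z < 1" using z by simp
  have "(1 - norm z ^ 2) powr (2 - \<alpha>) * norm (deriv (cesaro_op \<mu> f) z)
      \<le> 2 powr (2 - \<alpha>) * (1 - norm z) powr (2 - \<alpha>)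
        * (3 * N * (measure \<mu> (space \<mu>) + 2 * C / (2 - \<alpha>)) * (1 - norm z) powr (\<alpha> - 2))"
    using one_minus_square_powr_le[of "norm z" "2 - \<alpha>"] \<open>norm z < 1\<close> \<open>\<alpha> < 2\<close>
      norm_deriv_cesaro_op_le[OF assms]
    by (intro mult_mono) auto
  also have "\<dots> = 2 powr (2 - \<alpha>) * 3 * (measure \<mu> (space \<mu>) + 2 * C / (2 - \<alpha>)) * N
      * ((1 - norm z) powr (2 - \<alpha>) * (1 - norm z) powr (\<alpha> - 2))"
    by (simp add: ac_simps)
  also have "(1 - norm z) powr (2 - \<alpha>) * (1 - norm z) powr (\<alpha> - 2) = 1"
    using \<open>norm z < 1\<close> by (simp add: powr_add[symmetric])
  finally show ?thesis by simp
qed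

theorem mainTheorem8:
  fixes \<alpha> :: real and \<mu> :: "real measure"
  assumes "0 < \<alpha>" and "\<alpha> \<le> 1/2"
    and "borel_measure_on_01 \<mu>"
    and "carleson_measure \<alpha> \<mu>"
  shows "\<exists>K. \<forall>f\<in>Hinf. cesaro_op \<mu> f \<in> Bloch_type (2 - \<alpha>) \<and>
            Bloch_type_norm (2 - \<alpha>) (cesaro_op \<mu> f) \<le> K * Hinf_norm f"
proof -
  have sets: "sets \<mu> = sets (restrict_space borel {0..<1})" and "finite_measure \<mu>"
    using assms(3) by (auto simp: borel_measure_on_01_def)
  obtain C where carleson: "\<And>t. t \<in> {0..<1} \<Longrightarrow> measure \<mu> {t..<1} \<le> C * (1 - t) powr \<alpha>"
    using assms(4) unfolding carleson_measure_def by blast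
  define K where "K = measure \<mu> (space \<mu>) + 2 powr (2 - \<alpha>) * 3 * (measure \<mu> (space \<mu>) + 2 * C / (2 - \<alpha>))"
  show ?thesis
  proof (intro exI ballI conjI)
    fix f assume f: "f \<in> Hinf"
    then have hol: "f holomorphic_on ball 0 1" by (simp add: Hinf_def)
    note bound = norm_le_Hinf_norm[OF f]
    note weighted = Bloch_weight_deriv_cesaro_op_le[OF sets \<open>finite_measure \<mu>\<close> carleson _ _ hol bound]
    have "cesaro_op \<mu> f holomorphic_on ball 0 1"
      using has_field_derivative_cesaro_op[OF sets \<open>finite_measure \<mu>\<close> hol bound]
      by (auto simp: holomorphic_on_open field_differentiable_def intro!: exI)
    then show "cesaro_op \<mu> f \<in> Bloch_type (2 - \<alpha>)"
      unfolding Bloch_type_def using weighted assms(1,2) by (auto intro!: bdd_aboveI2)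
    have "norm (cesaro_op \<mu> f 0) \<le> measure \<mu> (space \<mu>) * Hinf_norm f"
      using bound[of 0] by (simp add: cesaro_op_def mult_left_mono)
    moreover have "(SUP z\<in>ball 0 1. (1 - norm z ^ 2) powr (2 - \<alpha>) * norm (deriv (cesaro_op \<mu> f) z))
        \<le> 2 powr (2 - \<alpha>) * 3 * (measure \<mu> (space \<mu>) + 2 * C / (2 - \<alpha>)) * Hinf_norm f"
      using weighted assms(1,2) by (intro cSUP_least) auto
    ultimately show "Bloch_type_norm (2 - \<alpha>) (cesaro_op \<mu> f) \<le> K * Hinf_norm f"
      unfolding Bloch_type_norm_def K_def by (simp add: algebra_simps)
  qed
qed

end
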